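(* Let $n\ge0$ and $k\ge1$ be integers and let $T$ be a bounded linear operator on the Hardy space $H^2(\mathbb{D})$ such that for some scalars $a_{ij}$ ($0\le i\le n+k$, $0\le j\le n$), $Tz^j=\sum_{i=0}^{n+k}a_{ij}z^i$ for $0\le j\le n$ and $Tz^j=z^{j+k}$ for $j\ge n+1$. Suppose the matrix $A_1=(a_{ij})_{0\le i,j\le n}$ is a contraction on $\mathbb{C}^{n+1}$. Then $T$ is analytic if and only if $T$ has no non-zero eigenvalue.
   Context: An operator $T$ on a Hilbert space $\mathcal{H}$ is analytic if $\bigcap_{m\ge1}T^m\mathcal{H}=\{0\}$. $H^2(\mathbb{D})$ is the Hardy space on the unit disc, with orthonormal basis $\{z^m\}_{m\ge0}$. *)

theory Defs
  imports "HOL-Analysis.Analysis"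
begin

text \<open>Model of the Hardy space H^2(D): an element f of H^2 is identified with its
  sequence of Taylor coefficients (f = sum f_m z^m), so H^2 is the space of
  square-summable complex sequences, and z^m corresponds to the m-th unit vector.\<close>

definition hardy2 :: "(nat \<Rightarrow> complex) set" where
  "hardy2 = {f. summable (\<lambda>m. (cmod (f m))\<^sup>2)}"

definition h2_norm :: "(nat \<Rightarrow> complex) \<Rightarrow> real" where
  "h2_norm f = sqrt (\<Sum>m. (cmod (f m))\<^sup>2)"

definition zpow :: "nat \<Rightarrow> (nat \<Rightarrow> complex)" where
  "zpow j = (\<lambda>m. if m = j then 1 else 0)"

definition bounded_op_h2 :: "((nat \<Rightarrow> complex) \<Rightarrow> (nat \<Rightarrow> complex)) \<Rightarrow> bool" where
  "bounded_op_h2 T \<longleftrightarrow>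
     (\<forall>f\<in>hardy2. T f \<in> hardy2) \<and>
     (\<forall>f\<in>hardy2. \<forall>g\<in>hardy2. T (\<lambda>m. f m + g m) = (\<lambda>m. T f m + T g m)) \<and>
     (\<forall>c. \<forall>f\<in>hardy2. T (\<lambda>m. c * f m) = (\<lambda>m. c * T f m)) \<and>
     (\<exists>C. \<forall>f\<in>hardy2. h2_norm (T f) \<le> C * h2_norm f)"

definition analytic_op_h2 :: "((nat \<Rightarrow> complex) \<Rightarrow> (nat \<Rightarrow> complex)) \<Rightarrow> bool" where
  "analytic_op_h2 T \<longleftrightarrow> (\<Inter>m\<in>{1..}. (T ^^ m) ` hardy2) = {(\<lambda>_. 0)}"

definition eigenvalue_h2 :: "((nat \<Rightarrow> complex) \<Rightarrow> (nat \<Rightarrow> complex)) \<Rightarrow> complex \<Rightarrow> bool" where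
  "eigenvalue_h2 T lam \<longleftrightarrow> (\<exists>f\<in>hardy2. f \<noteq> (\<lambda>_. 0) \<and> T f = (\<lambda>m. lam * f m))"

definition contraction_matrix :: "nat \<Rightarrow> (nat \<Rightarrow> nat \<Rightarrow> complex) \<Rightarrow> bool" where
  "contraction_matrix n a \<longleftrightarrow>
     (\<forall>x :: nat \<Rightarrow> complex.
        (\<Sum>i\<le>n. (cmod (\<Sum>j\<le>n. a i j * x j))\<^sup>2) \<le> (\<Sum>j\<le>n. (cmod (x j))\<^sup>2))"

end

theory Submission
  imports Defs "HOL-Library.Function_Algebras"
    "HOL-Computational_Algebra.Fundamental_Theorem_Algebra"
begin

(* By continuity, T agrees on H^2 with the explicit operator shift_op. With P = low_part the
   projection onto span {z^0, ..., z^n} one has P shift_op^m = A_1^m P. Since A_1 acts on an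
   (n + 1)-dimensional space, A_1^m P y = 0 already forces A_1^(n+1) P y = 0, and from then on the
   coefficients of shift_op^m y die out as m grows. Hence P and shift_op are injective on the core
   K = \<Inter>_m shift_op^m H^2. For x \<noteq> 0 in K the n + 2 vectors P shift_op^j x (j \<le> n + 1) are
   dependent, so p(shift_op) x = 0 for some polynomial p \<noteq> 0; factoring p over \<complex> yields an
   eigenvector in K, whose eigenvalue is nonzero by injectivity. Conversely, an eigenvector for an
   eigenvalue \<noteq> 0 lies in every T^m H^2. *)

lemma sum_fun_apply: "(sum f A) x = (\<Sum>a\<in>A. f a x)"
  by (induction A rule: infinite_finite_induct) auto

lemma hardy2_zero: "(\<lambda>_. 0) \<in> hardy2"
  by (simp add: hardy2_def)

lemma hardy2_add:
  assumes "f \<in> hardy2" "g \<in> hardy2"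
  shows "(\<lambda>m. f m + g m) \<in> hardy2"
proof -
  have "(cmod (f m + g m))\<^sup>2 \<le> 2 * (cmod (f m))\<^sup>2 + 2 * (cmod (g m))\<^sup>2" for m
  proof -
    have "(cmod (f m + g m))\<^sup>2 \<le> (cmod (f m) + cmod (g m))\<^sup>2"
      by (simp add: norm_triangle_ineq power_mono)
    also have "\<dots> \<le> 2 * (cmod (f m))\<^sup>2 + 2 * (cmod (g m))\<^sup>2"
      using zero_le_power2[of "cmod (f m) - cmod (g m)"]
      by (simp add: power2_eq_square algebra_simps)
    finally show ?thesis .
  qed
  moreover have "summable (\<lambda>m. 2 * (cmod (f m))\<^sup>2 + 2 * (cmod (g m))\<^sup>2)"
    using assms by (auto simp: hardy2_def intro!: summable_add summable_mult)
  ultimately show ?thesis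
    unfolding hardy2_def by (auto intro: summable_comparison_test')
qed

lemma hardy2_scale: "f \<in> hardy2 \<Longrightarrow> (\<lambda>m. c * f m) \<in> hardy2"
  by (auto simp: hardy2_def norm_mult power_mult_distrib intro!: summable_mult)

lemma hardy2_sum:
  "finite A \<Longrightarrow> (\<And>j. j \<in> A \<Longrightarrow> g j \<in> hardy2) \<Longrightarrow> (\<lambda>i. \<Sum>j\<in>A. c j * g j i) \<in> hardy2"
proof (induction A rule: finite_induct)
  case empty
  then show ?case by (simp add: hardy2_zero)
next
  case (insert x F)
  then show ?case
    using hardy2_add[OF hardy2_scale[of "g x" "c x"], of "\<lambda>i. \<Sum>j\<in>F. c j * g j i"] by simp
qed

lemma hardy2_shift_iff: "(\<lambda>m. f (m + N)) \<in> hardy2 \<longleftrightarrow> f \<in> hardy2"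
  using summable_iff_shift[of "\<lambda>m. (cmod (f m))\<^sup>2" N] by (simp add: hardy2_def)

lemma zpow_in_hardy2: "zpow j \<in> hardy2"
  unfolding hardy2_def mem_Collect_eq by (rule summable_finite[of "{j}"]) (auto simp: zpow_def)

lemma zpow_commute: "zpow j m = zpow m j"
  by (simp add: zpow_def)

lemma sum_mult_zpow:
  assumes "finite A"
  shows "(\<Sum>j\<in>A. c j * zpow j m) = (if m \<in> A then c m else 0)"
proof -
  have "(\<Sum>j\<in>A. c j * zpow j m) = (\<Sum>j\<in>A. if j = m then c j else 0)"
    by (rule sum.cong) (auto simp: zpow_def)
  then show ?thesis
    using assms by simp
qed

lemma norm_le_h2_norm:
  assumes "f \<in> hardy2"
  shows "cmod (f i) \<le> h2_norm f"
proof -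
  have "(cmod (f i))\<^sup>2 \<le> (\<Sum>m. (cmod (f m))\<^sup>2)"
    using sum_le_suminf[of "\<lambda>m. (cmod (f m))\<^sup>2" "{i}"] assms by (auto simp: hardy2_def)
  then show ?thesis
    unfolding h2_norm_def by (simp add: real_le_rsqrt)
qed

lemma h2_norm_tail_tendsto_zero:
  assumes "f \<in> hardy2"
  shows "(\<lambda>N. h2_norm (\<lambda>m. if m < N then 0 else f m)) \<longlonglongrightarrow> 0"
proof -
  have "h2_norm (\<lambda>m. if m < N then 0 else f m) = sqrt (\<Sum>m. (cmod (f (m + N)))\<^sup>2)" for N
  proof -
    let ?g = "\<lambda>m. (cmod (if m < N then 0 else f m))\<^sup>2"
    have "(\<lambda>m. if m < N then 0 else f m) \<in> hardy2"
      using hardy2_shift_iff[of "\<lambda>m. if m < N then 0 else f m" N] hardy2_shift_iff[of f N] assms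
      by simp
    then have "summable ?g"
      by (simp add: hardy2_def)
    then have "(\<Sum>m. ?g m) = (\<Sum>m. ?g (m + N)) + (\<Sum>m<N. ?g m)"
      by (rule suminf_split_initial_segment)
    then show ?thesis
      by (simp add: h2_norm_def)
  qed
  moreover have "(\<lambda>N. \<Sum>m. (cmod (f (m + N)))\<^sup>2) \<longlonglongrightarrow> 0"
    using suminf_exist_split2 assms by (simp add: hardy2_def)
  ultimately show ?thesis
    using tendsto_real_sqrt by fastforce
qed

lemma bounded_op_h2_in: "bounded_op_h2 T \<Longrightarrow> f \<in> hardy2 \<Longrightarrow> T f \<in> hardy2"
  and bounded_op_h2_add: "bounded_op_h2 T \<Longrightarrow> f \<in> hardy2 \<Longrightarrow> g \<in> hardy2 \<Longrightarrow>
    T (\<lambda>m. f m + g m) = (\<lambda>m. T f m + T g m)"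
  and bounded_op_h2_scale: "bounded_op_h2 T \<Longrightarrow> f \<in> hardy2 \<Longrightarrow>
    T (\<lambda>m. c * f m) = (\<lambda>m. c * T f m)"
  and bounded_op_h2_bound: "bounded_op_h2 T \<Longrightarrow> \<exists>C. \<forall>f\<in>hardy2. h2_norm (T f) \<le> C * h2_norm f"
  unfolding bounded_op_h2_def by blast+

lemma bounded_op_h2_zero: "bounded_op_h2 T \<Longrightarrow> T (\<lambda>_. 0) = (\<lambda>_. 0)"
  using bounded_op_h2_scale[of T "\<lambda>_. 0" 0] hardy2_zero by simp

lemma bounded_op_h2_sum:
  assumes T: "bounded_op_h2 T"
  shows "finite A \<Longrightarrow> (\<And>j. j \<in> A \<Longrightarrow> g j \<in> hardy2) \<Longrightarrow>
    T (\<lambda>i. \<Sum>j\<in>A. c j * g j i) = (\<lambda>i. \<Sum>j\<in>A. c j * T (g j) i)"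
proof (induction A rule: finite_induct)
  case empty
  then show ?case using bounded_op_h2_zero[OF T] by simp
next
  case (insert x F)
  have "T (\<lambda>i. \<Sum>j\<in>insert x F. c j * g j i) = T (\<lambda>i. c x * g x i + (\<Sum>j\<in>F. c j * g j i))"
    using insert by simp
  also have "\<dots> = (\<lambda>i. T (\<lambda>i. c x * g x i) i + T (\<lambda>i. \<Sum>j\<in>F. c j * g j i) i)"
    using insert by (intro bounded_op_h2_add[OF T] hardy2_scale hardy2_sum) auto
  also have "\<dots> = (\<lambda>i. \<Sum>j\<in>insert x F. c j * T (g j) i)"
    using insert bounded_op_h2_scale[OF T, of "g x" "c x"] by simp
  finally show ?case .
qed

lemma bounded_op_h2_truncation_tendsto:
  assumes T: "bounded_op_h2 T" and f: "f \<in> hardy2"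
  shows "(\<lambda>N. T (\<lambda>m. if m < N then f m else 0) i) \<longlonglongrightarrow> T f i"
proof -
  obtain C where C: "\<And>g. g \<in> hardy2 \<Longrightarrow> h2_norm (T g) \<le> C * h2_norm g"
    using bounded_op_h2_bound[OF T] by blast
  define head where "head N = (\<lambda>m. if m < N then f m else 0)" for N
  define tail where "tail N = (\<lambda>m. if m < N then 0 else f m)" for N
  have head_in: "head N \<in> hardy2" for N
  proof -
    have "head N = (\<lambda>m. \<Sum>j<N. f j * zpow j m)"
      by (simp add: head_def sum_mult_zpow)
    then show ?thesis
      by (simp add: hardy2_sum zpow_in_hardy2)
  qed
  have tail_in: "tail N \<in> hardy2" for N
    using hardy2_add[OF f hardy2_scale[OF head_in, of "-1"]]
    by (simp add: head_def tail_def if_distrib cong: if_cong)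
  have split: "T f = (\<lambda>m. T (head N) m + T (tail N) m)" for N
  proof -
    have "f = (\<lambda>m. head N m + tail N m)"
      by (simp add: head_def tail_def fun_eq_iff)
    then show ?thesis
      using bounded_op_h2_add[OF T head_in tail_in] by metis
  qed
  have bound: "norm (T (head N) i - T f i) \<le> C * h2_norm (tail N)" for N
  proof -
    have "norm (T (head N) i - T f i) = cmod (T (tail N) i)"
      using split[of N] by (metis add_diff_cancel_left' norm_minus_commute)
    also have "\<dots> \<le> h2_norm (T (tail N))"
      by (rule norm_le_h2_norm[OF bounded_op_h2_in[OF T tail_in]])
    also have "\<dots> \<le> C * h2_norm (tail N)"
      by (rule C[OF tail_in])
    finally show ?thesis .
  qed
  have "(\<lambda>N. C * h2_norm (tail N)) \<longlonglongrightarrow> 0"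
    using tendsto_mult_right_zero[OF h2_norm_tail_tendsto_zero[OF f]] by (simp add: tail_def)
  then have "(\<lambda>N. T (head N) i - T f i) \<longlonglongrightarrow> 0"
    by (rule Lim_null_comparison[rotated]) (simp add: bound)
  then show ?thesis
    by (simp add: head_def LIM_zero_iff)
qed

lemma eigenvector_in_funpow_range:
  assumes T: "bounded_op_h2 T" and f: "f \<in> hardy2" and eig: "T f = (\<lambda>i. lam * f i)"
    and "lam \<noteq> 0"
  shows "f \<in> (T ^^ m) ` hardy2"
proof -
  have "(T ^^ m) (\<lambda>i. inverse lam ^ m * f i) = f"
  proof (induction m)
    case (Suc m)
    have "T (\<lambda>i. inverse lam ^ Suc m * f i) = (\<lambda>i. inverse lam ^ m * f i)"
      using bounded_op_h2_scale[OF T f] eig \<open>lam \<noteq> 0\<close> by (simp add: fun_eq_iff)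
    then show ?case
      using Suc by (simp only: funpow_Suc_right o_apply)
  qed simp
  then show ?thesis
    using hardy2_scale[OF f] by (metis image_eqI)
qed

lemma analytic_op_h2_imp_no_eigenvalue:
  assumes "bounded_op_h2 T" "analytic_op_h2 T" "lam \<noteq> 0"
  shows "\<not> eigenvalue_h2 T lam"
proof
  assume "eigenvalue_h2 T lam"
  then obtain f where "f \<in> hardy2" "f \<noteq> (\<lambda>_. 0)" "T f = (\<lambda>i. lam * f i)"
    unfolding eigenvalue_h2_def by blast
  then have "f \<in> (\<Inter>m\<in>{1..}. (T ^^ m) ` hardy2)"
    using eigenvector_in_funpow_range assms by blast
  then show False
    using assms(2) \<open>f \<noteq> (\<lambda>_. 0)\<close> unfolding analytic_op_h2_def by blast
qed

lemma analytic_op_h2_iff_core: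
  assumes T: "bounded_op_h2 T"
  shows "analytic_op_h2 T \<longleftrightarrow> (\<Inter>m. (T ^^ m) ` hardy2) = {\<lambda>_. 0}"
proof -
  have "(\<Inter>m\<in>{1..}. (T ^^ m) ` hardy2) \<subseteq> (T ^^ m) ` hardy2" for m
  proof (cases "m = 0")
    case True
    have "(\<Inter>m\<in>{1..}. (T ^^ m) ` hardy2) \<subseteq> (T ^^ 1) ` hardy2"
      by (rule INT_lower) simp
    then show ?thesis
      using True bounded_op_h2_in[OF T] by auto
  qed (rule INT_lower, simp)
  then have "(\<Inter>m. (T ^^ m) ` hardy2) = (\<Inter>m\<in>{1..}. (T ^^ m) ` hardy2)"
    by blast
  then show ?thesis
    by (simp add: analytic_op_h2_def)
qed

lemma supported_family_dependent:
  fixes v :: "nat \<Rightarrow> nat \<Rightarrow> complex"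
  assumes supp: "\<And>j i. n < i \<Longrightarrow> v j i = 0"
  shows "\<exists>\<alpha>. (\<exists>j\<le>Suc n. \<alpha> j \<noteq> 0) \<and> (\<forall>i. (\<Sum>j\<le>Suc n. \<alpha> j * v j i) = 0)"
proof (cases "inj_on v {..Suc n}")
  case False
  then obtain j1 j2 where j12: "j1 \<le> Suc n" "j2 \<le> Suc n" "j1 \<noteq> j2" "v j1 = v j2"
    by (auto simp: inj_on_def)
  define \<alpha> where "\<alpha> j = (if j = j1 then 1 else if j = j2 then -1 else (0::complex))" for j
  have "(\<Sum>j\<le>Suc n. \<alpha> j * v j i) = (\<Sum>j\<in>{j1, j2}. \<alpha> j * v j i)" for i
    by (rule sum.mono_neutral_right) (use j12 in \<open>auto simp: \<alpha>_def\<close>)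
  then show ?thesis
    using j12 by (intro exI[of _ \<alpha>]) (auto simp: \<alpha>_def)
next
  case True
  interpret fun_space: vector_space "\<lambda>(c::complex) (f::nat \<Rightarrow> complex) i. c * f i"
    by unfold_locales (auto simp: fun_eq_iff algebra_simps)
  let ?S = "v ` {..Suc n}"
  have "?S \<subseteq> fun_space.span (zpow ` {..n})"
  proof
    fix x assume "x \<in> ?S"
    then obtain j where "x = v j" by auto
    then have "x = (\<Sum>i\<le>n. (\<lambda>m. x i * zpow i m))"
      using supp by (auto simp: sum_fun_apply sum_mult_zpow fun_eq_iff)
    also have "\<dots> \<in> fun_space.span (zpow ` {..n})"
      by (intro fun_space.span_sum fun_space.span_scale fun_space.span_base) auto
    finally show "x \<in> fun_space.span (zpow ` {..n})" .
  qed
  moreover have "card (zpow ` {..n}) < card ?S"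
    using card_image_le[of "{..n}" zpow] card_image[OF True] by simp
  ultimately have "fun_space.dependent ?S"
    using fun_space.independent_span_bound[of "zpow ` {..n}" ?S] by fastforce
  then obtain u where u: "\<exists>x\<in>?S. u x \<noteq> 0" "(\<Sum>x\<in>?S. (\<lambda>i. u x * x i)) = (\<lambda>_. 0)"
    using fun_space.dependent_finite[of ?S] by (auto simp: zero_fun_def)
  have "(\<Sum>j\<le>Suc n. u (v j) * v j i) = 0" for i
    using fun_cong[OF u(2), of i] sum.reindex[OF True, of "\<lambda>x. u x * x i"]
    by (simp add: sum_fun_apply)
  then show ?thesis
    using u(1) by (intro exI[of _ "u \<circ> v"]) auto
qed

locale linear_seq_op =
  fixes L :: "(nat \<Rightarrow> complex) \<Rightarrow> (nat \<Rightarrow> complex)"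
  assumes lincomb: "\<And>(A :: nat set) c g. L (\<lambda>i. \<Sum>j\<in>A. c j * g j i) = (\<lambda>i. \<Sum>j\<in>A. c j * L (g j) i)"
begin

lemma funpow_lincomb:
  fixes A :: "nat set"
  shows "(L ^^ m) (\<lambda>i. \<Sum>j\<in>A. c j * g j i) = (\<lambda>i. \<Sum>j\<in>A. c j * (L ^^ m) (g j) i)"
  by (induction m) (simp_all add: lincomb)

lemma funpow_zero: "(L ^^ m) (\<lambda>_. 0) = (\<lambda>_. 0)"
  using funpow_lincomb[where A = "{}"] by simp

lemma funpow_eq_zero_mono:
  assumes "(L ^^ N) u = (\<lambda>_. 0)" "N \<le> M"
  shows "(L ^^ M) u = (\<lambda>_. 0)"
proof -
  have "(L ^^ M) u = (L ^^ (M - N)) ((L ^^ N) u)"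
    using funpow_add[of "M - N" N L] \<open>N \<le> M\<close> by simp
  then show ?thesis
    using assms(1) funpow_zero by simp
qed

lemma funpow_pred_eq_zero:
  assumes supp_L: "\<And>u i. n < i \<Longrightarrow> L u i = 0" and supp_u: "\<And>i. n < i \<Longrightarrow> u i = 0"
    and zero: "(L ^^ Suc N) u = (\<lambda>_. 0)" and "n < N"
  shows "(L ^^ N) u = (\<lambda>_. 0)"
proof -
  have "n < i \<Longrightarrow> (L ^^ j) u i = 0" for i j
    using supp_L supp_u by (cases j) auto
  then obtain \<alpha> where \<alpha>: "\<exists>j\<le>Suc n. \<alpha> j \<noteq> 0" "\<And>i. (\<Sum>j\<le>Suc n. \<alpha> j * (L ^^ j) u i) = 0"
    using supported_family_dependent[of n "\<lambda>j. (L ^^ j) u"] by blast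
  define j0 where "j0 = (LEAST j. \<alpha> j \<noteq> 0)"
  obtain j1 where j1: "j1 \<le> Suc n" "\<alpha> j1 \<noteq> 0"
    using \<alpha>(1) by blast
  have j0_nz: "\<alpha> j0 \<noteq> 0"
    unfolding j0_def by (rule LeastI[of _ j1]) (fact j1(2))
  have j0_le: "j0 \<le> Suc n"
    using Least_le[of "\<lambda>j. \<alpha> j \<noteq> 0" j1] j1 unfolding j0_def by linarith
  have below_j0: "\<alpha> j = 0" if "j < j0" for j
    using not_less_Least[OF that[unfolded j0_def]] by blast
  have other_terms: "\<alpha> j * (L ^^ (N - j0 + j)) u i = 0" if "j \<noteq> j0" for i j
  proof (cases "j < j0")
    case False
    then have "Suc N \<le> N - j0 + j"
      using that j0_le \<open>n < N\<close> by linarith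
    then show ?thesis
      using funpow_eq_zero_mono[OF zero] by simp
  qed (simp add: below_j0)
  \<comment> \<open>Apply \<open>L ^^ (N - j0)\<close> to the relation: only its \<open>j0\<close>-th term survives.\<close>
  have "\<alpha> j0 * (L ^^ N) u i = 0" for i
  proof -
    have "0 = (\<Sum>j\<le>Suc n. \<alpha> j * (L ^^ (N - j0 + j)) u i)"
      using fun_cong[OF funpow_lincomb[where m = "N - j0" and A = "{..Suc n}" and c = \<alpha>
          and g = "\<lambda>j. (L ^^ j) u"], of i] \<alpha>(2) funpow_zero
      by (simp add: funpow_add)
    also have "\<dots> = (\<Sum>j\<in>{j0}. \<alpha> j * (L ^^ (N - j0 + j)) u i)"
      by (rule sum.mono_neutral_right) (use other_terms j0_le in auto)
    also have "\<dots> = \<alpha> j0 * (L ^^ N) u i"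
      using j0_le \<open>n < N\<close> by simp
    finally show ?thesis
      by simp
  qed
  then show ?thesis
    using j0_nz by (simp add: fun_eq_iff)
qed

lemma funpow_Suc_dim_eq_zero:
  assumes supp_L: "\<And>u i. n < i \<Longrightarrow> L u i = 0" and supp_u: "\<And>i. n < i \<Longrightarrow> u i = 0"
  shows "(L ^^ N) u = (\<lambda>_. 0) \<Longrightarrow> (L ^^ Suc n) u = (\<lambda>_. 0)"
proof (induction N)
  case 0
  then show ?case
    using funpow_zero[of "Suc n"] by (simp del: funpow.simps)
next
  case (Suc N)
  show ?case
  proof (cases "N \<le> n")
    case True
    then show ?thesis
      by (intro funpow_eq_zero_mono[OF Suc.prems]) simp
  next
    case False
    then show ?thesis
      using Suc funpow_pred_eq_zero[OF supp_L supp_u] by simp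
  qed
qed

definition poly_apply :: "complex poly \<Rightarrow> (nat \<Rightarrow> complex) \<Rightarrow> (nat \<Rightarrow> complex)" where
  "poly_apply p y = (\<lambda>i. \<Sum>j\<le>degree p. coeff p j * (L ^^ j) y i)"

lemma poly_apply_eq:
  "degree p \<le> N \<Longrightarrow> poly_apply p y = (\<lambda>i. \<Sum>j\<le>N. coeff p j * (L ^^ j) y i)"
  unfolding poly_apply_def fun_eq_iff
  by (intro allI sum.mono_neutral_left) (auto simp: coeff_eq_0)

lemma ex_poly_apply_eq:
  assumes "\<exists>j\<le>N. \<alpha> j \<noteq> 0"
  shows "\<exists>p. p \<noteq> 0 \<and> poly_apply p y = (\<lambda>i. \<Sum>j\<le>N. \<alpha> j * (L ^^ j) y i)"
proof -
  define p where "p = (\<Sum>j\<le>N. monom (\<alpha> j) j)"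
  have coeff_p: "coeff p j = (if j \<le> N then \<alpha> j else 0)" for j
    unfolding p_def by (simp add: coeff_sum coeff_monom)
  then have "p \<noteq> 0"
    using assms by (metis coeff_0)
  moreover have "degree p \<le> N"
    by (rule degree_le) (simp add: coeff_p)
  ultimately show ?thesis
    using poly_apply_eq[of p N y] by (auto simp: coeff_p)
qed

lemma poly_apply_add: "poly_apply (p + q) y = (\<lambda>i. poly_apply p y i + poly_apply q y i)"
proof -
  let ?N = "max (degree p) (degree q)"
  have "degree (p + q) \<le> ?N"
    by (rule degree_add_le_max)
  then show ?thesis
    using poly_apply_eq[of p ?N y] poly_apply_eq[of q ?N y] poly_apply_eq[of "p + q" ?N y]
    by (simp add: sum.distrib distrib_right)
qed

lemma poly_apply_smult: "poly_apply (smult c p) y = (\<lambda>i. c * poly_apply p y i)"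
  using poly_apply_eq[of "smult c p" "degree p" y] degree_smult_le[of c p]
  by (simp add: poly_apply_def sum_distrib_left mult_ac)

lemma poly_apply_pCons_0: "poly_apply (pCons 0 p) y = L (poly_apply p y)"
proof -
  have "poly_apply (pCons 0 p) y = (\<lambda>i. \<Sum>j\<le>Suc (degree p). coeff (pCons 0 p) j * (L ^^ j) y i)"
    by (rule poly_apply_eq) (simp add: degree_pCons_le)
  also have "\<dots> = (\<lambda>i. \<Sum>j\<le>degree p. coeff p j * L ((L ^^ j) y) i)"
    unfolding sum.atMost_Suc_shift by simp
  also have "\<dots> = L (poly_apply p y)"
    unfolding poly_apply_def lincomb ..
  finally show ?thesis .
qed

lemma poly_apply_linear_factor:
  "poly_apply ([:-z, 1:] * p) y = (\<lambda>i. L (poly_apply p y) i - z * poly_apply p y i)"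
proof -
  have "[:-z, 1:] * p = smult (-z) p + pCons 0 p"
    by simp
  then show ?thesis
    by (simp only: poly_apply_add poly_apply_smult poly_apply_pCons_0) (simp add: fun_eq_iff)
qed

text \<open>Over \<open>\<complex>\<close> an annihilating polynomial splits into linear factors, one of which
  must already annihilate a nonzero vector of the form \<open>q(L) y\<close>.\<close>
lemma eigenvector_from_annihilating_poly:
  "p \<noteq> 0 \<Longrightarrow> y \<noteq> (\<lambda>_. 0) \<Longrightarrow> poly_apply p y = (\<lambda>_. 0) \<Longrightarrow>
    \<exists>q z. poly_apply q y \<noteq> (\<lambda>_. 0) \<and> L (poly_apply q y) = (\<lambda>i. z * poly_apply q y i)"
proof (induction "degree p" arbitrary: p rule: less_induct)
  case less
  show ?case
  proof (cases "degree p = 0")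
    case True
    then have "poly_apply p y = (\<lambda>i. coeff p 0 * y i)" and "coeff p 0 \<noteq> 0"
      using less.prems(1) leading_coeff_0_iff[of p] by (simp_all add: poly_apply_def)
    then show ?thesis
      using less.prems(2,3) by (simp add: fun_eq_iff)
  next
    case False
    then obtain z where "poly p z = 0"
      by (metis constant_degree fundamental_theorem_of_algebra)
    then obtain q where pq: "p = [:-z, 1:] * q"
      by (metis dvdE poly_eq_0_iff_dvd)
    with less.prems(1) have "q \<noteq> 0"
      by auto
    have "degree p = degree [:-z, 1:] + degree q"
      unfolding pq using \<open>q \<noteq> 0\<close> by (intro degree_mult_eq) simp_all
    then have "degree q < degree p"
      by simp
    show ?thesis
    proof (cases "poly_apply q y = (\<lambda>_. 0)")
      case True
      show ?thesis
        by (rule less.hyps) fact+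
    next
      case False
      have "L (poly_apply q y) = (\<lambda>i. z * poly_apply q y i)"
        using less.prems(3) unfolding pq poly_apply_linear_factor by (simp add: fun_eq_iff)
      with False show ?thesis
        by blast
    qed
  qed
qed

end

lemma sum_mult_lincomb:
  fixes b c :: "_ \<Rightarrow> 'a::comm_semiring_0"
  shows "(\<Sum>l\<in>B. b l * (\<Sum>j\<in>A. c j * g j l)) = (\<Sum>j\<in>A. c j * (\<Sum>l\<in>B. b l * g j l))"
proof -
  have "(\<Sum>l\<in>B. b l * (\<Sum>j\<in>A. c j * g j l)) = (\<Sum>l\<in>B. \<Sum>j\<in>A. c j * (b l * g j l))"
    by (simp add: sum_distrib_left mult_ac)
  also have "\<dots> = (\<Sum>j\<in>A. \<Sum>l\<in>B. c j * (b l * g j l))"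
    by (rule sum.swap)
  finally show ?thesis
    by (simp add: sum_distrib_left)
qed

locale shift_perturbation =
  fixes n k :: nat and a :: "nat \<Rightarrow> nat \<Rightarrow> complex"
  assumes k_pos: "1 \<le> k"
begin

definition shift_op :: "(nat \<Rightarrow> complex) \<Rightarrow> (nat \<Rightarrow> complex)" where
  "shift_op f = (\<lambda>i. if i \<le> n + k then \<Sum>j\<le>n. a i j * f j else f (i - k))"

definition low_part :: "(nat \<Rightarrow> complex) \<Rightarrow> (nat \<Rightarrow> complex)" where
  "low_part f = (\<lambda>i. if i \<le> n then f i else 0)"

definition A1 :: "(nat \<Rightarrow> complex) \<Rightarrow> (nat \<Rightarrow> complex)" where
  "A1 f = (\<lambda>i. if i \<le> n then \<Sum>j\<le>n. a i j * f j else 0)"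

definition core :: "(nat \<Rightarrow> complex) set" where
  "core = (\<Inter>m. (shift_op ^^ m) ` hardy2)"

sublocale shift_op: linear_seq_op shift_op
  by unfold_locales (auto simp: shift_op_def fun_eq_iff sum_mult_lincomb[where B = "{..n}"])

sublocale A1: linear_seq_op A1
  by unfold_locales (auto simp: A1_def fun_eq_iff sum_mult_lincomb[where B = "{..n}"])

lemma shift_op_hardy2:
  assumes "f \<in> hardy2"
  shows "shift_op f \<in> hardy2"
proof -
  have "(\<lambda>m. shift_op f (m + Suc (n + k))) = (\<lambda>m. f (m + Suc n))"
    using k_pos by (auto simp: shift_op_def fun_eq_iff Suc_diff_le)
  then show ?thesis
    using assms hardy2_shift_iff[of "shift_op f"] hardy2_shift_iff[of f] by metis
qed

lemma funpow_shift_op_hardy2: "f \<in> hardy2 \<Longrightarrow> (shift_op ^^ m) f \<in> hardy2"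
  by (induction m) (simp_all add: shift_op_hardy2)

lemma shift_op_truncation:
  assumes "n + i < N"
  shows "shift_op (\<lambda>m. if m < N then f m else 0) i = shift_op f i"
  using assms k_pos by (auto simp: shift_op_def intro!: sum.cong)

lemma bounded_op_eq_shift_op:
  assumes T: "bounded_op_h2 T"
    and low: "\<And>j. j \<le> n \<Longrightarrow> T (zpow j) = (\<lambda>i. \<Sum>l\<le>n + k. a l j * zpow l i)"
    and high: "\<And>j. j \<ge> n + 1 \<Longrightarrow> T (zpow j) = zpow (j + k)"
    and f: "f \<in> hardy2"
  shows "T f = shift_op f"
proof
  fix i
  have "T (zpow j) = shift_op (zpow j)" for j
  proof (cases "j \<le> n")
    case True
    have "T (zpow j) i = (if i \<le> n + k then a i j else 0)" for i
      using low[OF True] by (simp add: sum_mult_zpow)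
    moreover have "shift_op (zpow j) i = (if i \<le> n + k then a i j else 0)" for i
      using True by (auto simp: shift_op_def zpow_commute[of j] sum_mult_zpow) (simp add: zpow_def)
    ultimately show ?thesis
      by auto
  next
    case False
    then show ?thesis
      using high[of j] k_pos by (auto simp: shift_op_def zpow_def fun_eq_iff)
  qed
  then have "T (\<lambda>m. if m < N then f m else 0) = shift_op (\<lambda>m. if m < N then f m else 0)" for N
    using bounded_op_h2_sum[OF T, of "{..<N}" zpow f] shift_op.lincomb[of f zpow "{..<N}"]
    by (simp add: zpow_in_hardy2 sum_mult_zpow)
  then have "(\<lambda>N. shift_op (\<lambda>m. if m < N then f m else 0) i) \<longlonglongrightarrow> T f i"
    using bounded_op_h2_truncation_tendsto[OF T f] by simp
  moreover have "(\<lambda>N. shift_op (\<lambda>m. if m < N then f m else 0) i) \<longlonglongrightarrow> shift_op f i"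
    by (rule tendsto_eventually, rule eventually_mono[OF eventually_gt_at_top[of "n + i"]])
      (rule shift_op_truncation)
  ultimately show "T f i = shift_op f i"
    by (rule LIMSEQ_unique)
qed

lemma low_part_lincomb: "low_part (\<lambda>i. \<Sum>j\<in>A. c j * g j i) = (\<lambda>i. \<Sum>j\<in>A. c j * low_part (g j) i)"
  by (simp add: low_part_def fun_eq_iff)

lemma low_part_shift_op: "low_part (shift_op f) = A1 f"
  by (auto simp: low_part_def shift_op_def A1_def)

lemma A1_low_part: "A1 (low_part f) = A1 f"
  by (auto simp: low_part_def A1_def)

lemma low_part_funpow_shift_op: "low_part ((shift_op ^^ m) f) = (A1 ^^ m) (low_part f)"
proof (induction m)
  case (Suc m)
  have "low_part ((shift_op ^^ Suc m) f) = A1 (low_part ((shift_op ^^ m) f))"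
    by (simp add: low_part_shift_op A1_low_part)
  then show ?case
    using Suc.IH by simp
qed simp

lemma A1_funpow_low_part_eq_zero:
  "(A1 ^^ N) (low_part f) = (\<lambda>_. 0) \<Longrightarrow> (A1 ^^ Suc n) (low_part f) = (\<lambda>_. 0)"
  by (rule A1.funpow_Suc_dim_eq_zero) (auto simp: A1_def low_part_def)

text \<open>Coefficients \<open>\<le> n + k\<close> of \<open>shift_op g\<close> only see \<open>low_part g\<close>, and the higher ones are
  shifted up by \<open>k \<ge> 1\<close>; so once \<open>A1\<close> has annihilated \<open>low_part y\<close>, every coefficient of
  \<open>shift_op ^^ m\<close> eventually dies.\<close>
lemma funpow_shift_op_coeff_eq_zero:
  assumes nil: "(A1 ^^ Suc n) (low_part y) = (\<lambda>_. 0)"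
  shows "n + 1 + i < m \<Longrightarrow> (shift_op ^^ m) y i = 0"
proof (induction i arbitrary: m rule: less_induct)
  case (less i)
  then obtain m' where m: "m = Suc m'" "n + 1 + i \<le> m'"
    by (cases m) auto
  define g where "g = (shift_op ^^ m') y"
  have "low_part g = (\<lambda>_. 0)"
    using A1.funpow_eq_zero_mono[OF nil, of m'] m(2)
    by (simp add: g_def low_part_funpow_shift_op)
  then have g_low: "g j = 0" if "j \<le> n" for j
    using that by (simp add: low_part_def fun_eq_iff) metis
  have "(shift_op ^^ m) y i = shift_op g i"
    by (simp add: m(1) g_def)
  also have "\<dots> = 0"
  proof (cases "i \<le> n + k")
    case True
    then show ?thesis
      by (simp add: shift_op_def g_low)
  next
    case False
    then have "shift_op g i = (shift_op ^^ m') y (i - k)"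
      by (simp add: shift_op_def g_def)
    also have "\<dots> = 0"
      using less.IH[of "i - k" m'] m(2) k_pos False by simp
    finally show ?thesis .
  qed
  finally show ?case .
qed

lemma core_funpow_range: "x \<in> core \<Longrightarrow> \<exists>y\<in>hardy2. x = (shift_op ^^ m) y"
  by (auto simp: core_def)

lemma core_subset_hardy2: "core \<subseteq> hardy2"
  using core_funpow_range[of _ 0] by auto

lemma zero_in_core: "(\<lambda>_. 0) \<in> core"
  unfolding core_def
  by (intro INT_I rev_image_eqI[OF hardy2_zero]) (simp add: shift_op.funpow_zero)

lemma shift_op_core:
  assumes "x \<in> core"
  shows "shift_op x \<in> core"
  unfolding core_def
proof
  fix m
  obtain y where "y \<in> hardy2" "x = (shift_op ^^ m) y"
    using core_funpow_range[OF assms] by blast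
  then have "shift_op x = (shift_op ^^ m) (shift_op y)"
    by (simp add: funpow_swap1)
  with \<open>y \<in> hardy2\<close> show "shift_op x \<in> (shift_op ^^ m) ` hardy2"
    by (simp add: shift_op_hardy2)
qed

lemma funpow_shift_op_core: "x \<in> core \<Longrightarrow> (shift_op ^^ j) x \<in> core"
  by (induction j) (simp_all add: shift_op_core)

lemma core_lincomb:
  fixes A :: "nat set"
  assumes "\<And>j. j \<in> A \<Longrightarrow> g j \<in> core"
  shows "(\<lambda>i. \<Sum>j\<in>A. c j * g j i) \<in> core"
proof (cases "finite A")
  case True
  show ?thesis
    unfolding core_def
  proof
    fix m
    obtain y where y: "\<And>j. j \<in> A \<Longrightarrow> y j \<in> hardy2 \<and> g j = (shift_op ^^ m) (y j)"
      using core_funpow_range[OF assms, of _ m] by metis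
    then have "(\<lambda>i. \<Sum>j\<in>A. c j * g j i) = (shift_op ^^ m) (\<lambda>i. \<Sum>j\<in>A. c j * y j i)"
      by (simp add: shift_op.funpow_lincomb)
    moreover have "(\<lambda>i. \<Sum>j\<in>A. c j * y j i) \<in> hardy2"
      using y True by (intro hardy2_sum) auto
    ultimately show "(\<lambda>i. \<Sum>j\<in>A. c j * g j i) \<in> (shift_op ^^ m) ` hardy2"
      by blast
  qed
next
  case False
  then show ?thesis
    by (simp add: zero_in_core)
qed

lemma poly_apply_core: "x \<in> core \<Longrightarrow> shift_op.poly_apply p x \<in> core"
  unfolding shift_op.poly_apply_def by (intro core_lincomb funpow_shift_op_core)

lemma low_part_inj_on_core:
  assumes "x \<in> core" "low_part x = (\<lambda>_. 0)"
  shows "x = (\<lambda>_. 0)"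
proof
  fix i
  obtain y where "y \<in> hardy2" and x: "x = (shift_op ^^ (n + 2 + i)) y"
    using core_funpow_range[OF assms(1)] by blast
  have "(A1 ^^ (n + 2 + i)) (low_part y) = low_part x"
    by (simp only: x low_part_funpow_shift_op)
  then have "(A1 ^^ (n + 2 + i)) (low_part y) = (\<lambda>_. 0)"
    using assms(2) by simp
  then have "(A1 ^^ Suc n) (low_part y) = (\<lambda>_. 0)"
    by (rule A1_funpow_low_part_eq_zero)
  then show "x i = 0"
    unfolding x by (rule funpow_shift_op_coeff_eq_zero) simp
qed

lemma shift_op_inj_on_core:
  assumes "x \<in> core" "shift_op x = (\<lambda>_. 0)"
  shows "x = (\<lambda>_. 0)"
proof -
  obtain y where "y \<in> hardy2" and x: "x = (shift_op ^^ Suc n) y"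
    using core_funpow_range[OF assms(1)] by blast
  then have low_x: "low_part x = (A1 ^^ Suc n) (low_part y)"
    by (simp only: low_part_funpow_shift_op)
  have "A1 (low_part x) = low_part (shift_op x)"
    by (simp add: A1_low_part low_part_shift_op)
  then have "A1 (low_part x) = (\<lambda>_. 0)"
    using assms(2) by (simp add: low_part_def)
  then have "(A1 ^^ Suc (Suc n)) (low_part y) = (\<lambda>_. 0)"
    by (simp add: low_x)
  then have "low_part x = (\<lambda>_. 0)"
    unfolding low_x by (rule A1_funpow_low_part_eq_zero)
  with assms(1) show ?thesis
    by (rule low_part_inj_on_core)
qed

lemma core_eigenvector:
  assumes "x \<in> core" "x \<noteq> (\<lambda>_. 0)"
  shows "\<exists>w\<in>core. w \<noteq> (\<lambda>_. 0) \<and> (\<exists>l. l \<noteq> 0 \<and> shift_op w = (\<lambda>i. l * w i))"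
proof -
  obtain \<alpha> where \<alpha>: "\<exists>j\<le>Suc n. \<alpha> j \<noteq> 0"
    "\<And>i. (\<Sum>j\<le>Suc n. \<alpha> j * low_part ((shift_op ^^ j) x) i) = 0"
    using supported_family_dependent[of n "\<lambda>j. low_part ((shift_op ^^ j) x)"]
    by (auto simp: low_part_def)
  obtain p where "p \<noteq> 0" and p: "shift_op.poly_apply p x = (\<lambda>i. \<Sum>j\<le>Suc n. \<alpha> j * (shift_op ^^ j) x i)"
    using shift_op.ex_poly_apply_eq[OF \<alpha>(1)] by blast
  have "low_part (shift_op.poly_apply p x) = (\<lambda>_. 0)"
    unfolding p low_part_lincomb using \<alpha>(2) by simp
  then have "shift_op.poly_apply p x = (\<lambda>_. 0)"
    using low_part_inj_on_core poly_apply_core[OF assms(1)] by blast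
  then obtain q l where w: "shift_op.poly_apply q x \<noteq> (\<lambda>_. 0)"
    and eig: "shift_op (shift_op.poly_apply q x) = (\<lambda>i. l * shift_op.poly_apply q x i)"
    using shift_op.eigenvector_from_annihilating_poly[OF \<open>p \<noteq> 0\<close> assms(2)] by blast
  have "l \<noteq> 0"
    using shift_op_inj_on_core[OF poly_apply_core[OF assms(1)]] w eig by auto
  then show ?thesis
    using poly_apply_core[OF assms(1)] w eig by blast
qed


lemma analytic_op_h2_iff_core_eq_zero:
  assumes T: "bounded_op_h2 T" and T_eq: "\<And>f. f \<in> hardy2 \<Longrightarrow> T f = shift_op f"
  shows "analytic_op_h2 T \<longleftrightarrow> core = {\<lambda>_. 0}"
proof -
  have "(T ^^ m) f = (shift_op ^^ m) f" if "f \<in> hardy2" for f m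
    using that by (induction m) (simp_all add: T_eq funpow_shift_op_hardy2)
  then have "(\<Inter>m. (T ^^ m) ` hardy2) = core"
    unfolding core_def by (simp cong: image_cong)
  then show ?thesis
    using analytic_op_h2_iff_core[OF T] by simp
qed

lemma core_eq_zero_if_no_eigenvalue:
  assumes T_eq: "\<And>f. f \<in> hardy2 \<Longrightarrow> T f = shift_op f"
    and no_eig: "\<forall>lam. lam \<noteq> 0 \<longrightarrow> \<not> eigenvalue_h2 T lam"
  shows "core = {\<lambda>_. 0}"
proof (rule ccontr)
  assume "core \<noteq> {\<lambda>_. 0}"
  then obtain x where "x \<in> core" "x \<noteq> (\<lambda>_. 0)"
    using zero_in_core by blast
  then obtain w l where "w \<in> core" "w \<noteq> (\<lambda>_. 0)" "l \<noteq> 0" "shift_op w = (\<lambda>i. l * w i)"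
    using core_eigenvector by blast
  then have "eigenvalue_h2 T l"
    using core_subset_hardy2 T_eq unfolding eigenvalue_h2_def by auto
  with no_eig \<open>l \<noteq> 0\<close> show False
    by blast
qed

end

theorem theorem4p3:
  fixes n k :: nat and T :: "(nat \<Rightarrow> complex) \<Rightarrow> (nat \<Rightarrow> complex)"
    and a :: "nat \<Rightarrow> nat \<Rightarrow> complex"
  assumes "k \<ge> 1"
    and "bounded_op_h2 T"
    and "\<And>j. j \<le> n \<Longrightarrow> T (zpow j) = (\<lambda>i. \<Sum>l\<le>n + k. a l j * zpow l i)"
    and "\<And>j. j \<ge> n + 1 \<Longrightarrow> T (zpow j) = zpow (j + k)"
    and "contraction_matrix n a"
  shows "analytic_op_h2 T \<longleftrightarrow> (\<forall>lam. lam \<noteq> 0 \<longrightarrow> \<not> eigenvalue_h2 T lam)"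
proof -
  interpret shift_perturbation n k a
    using assms(1) by unfold_locales
  have T_eq: "T f = shift_op f" if "f \<in> hardy2" for f
    using bounded_op_eq_shift_op[OF assms(2-4) that] .
  show ?thesis
    using analytic_op_h2_iff_core_eq_zero[OF assms(2) T_eq] core_eq_zero_if_no_eigenvalue[OF T_eq]
      analytic_op_h2_imp_no_eigenvalue[OF assms(2)] by blast
qed

end
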